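(* Let $G$ be a group. Then $G$ is sofic as a group if and only if $G$ is sofic as a monoid.
   Context: For a non-empty finite set $X$, $\mathrm{Map}(X)$ is the monoid of all maps $X\to X$ under composition (identity $\mathrm{Id}_X$), and $\mathrm{Sym}(X)$ its group of bijections; both carry the Hamming metric $d_X(f,g)=|\{x\in X : f(x)\ne g(x)\}|/|X|$. A group $G$ is sofic as a group if for every finite $K\subset G$ and every $\varepsilon>0$ there exist a non-empty finite set $X$ and a map $\varphi\colon G\to\mathrm{Sym}(X)$ such that $d_X(\varphi(gh),\varphi(g)\varphi(h))\le\varepsilon$ for all $g,h\in K$ and $d_X(\varphi(g),\varphi(h))\ge 1-\varepsilon$ for all distinct $g,h\in K$ (the standard notion of sofic group). For a monoid $M$, finite $K\subset M$ and $\varepsilon,\alpha>0$, a map $\varphi\colon M\to\mathrm{Map}(X)$ is a $(K,\varepsilon)$-morphism if $d_X(\varphi(k_1k_2),\varphi(k_1)\varphi(k_2))\le\varepsilon$ for all $k_1,k_2\in K$ and $d_X(\varphi(1_M),\mathrm{Id}_X)\le\varepsilon$; it is $(K,\alpha)$-injective if $d_X(\varphi(k_1),\varphi(k_2))\ge\alpha$ for all distinct $k_1,k_2\in K$. A monoid $M$ is sofic (as a monoid) if for every finite $K\subset M$ and $\varepsilon>0$ there are a non-empty finite set $X$ and a $(K,1-\varepsilon)$-injective $(K,\varepsilon)$-morphism $\varphi\colon M\to\mathrm{Map}(X)$. *)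

theory Defs
  imports Complex_Main "HOL-Algebra.Group"
begin

text \<open>Finite sets X are represented as finite subsets of nat (every finite set is in
bijection with one). Maps X to X are functions nat to nat sending X into X; only
their values on X matter.\<close>

definition hamming :: "nat set \<Rightarrow> (nat \<Rightarrow> nat) \<Rightarrow> (nat \<Rightarrow> nat) \<Rightarrow> real" where
  "hamming X f g = real (card {x \<in> X. f x \<noteq> g x}) / real (card X)"

definition sofic_group :: "('a, 'b) monoid_scheme \<Rightarrow> bool" where
  "sofic_group G \<longleftrightarrow>
    (\<forall>K \<subseteq> carrier G. finite K \<longrightarrow> (\<forall>\<epsilon>::real. \<epsilon> > 0 \<longrightarrow>
      (\<exists>(X::nat set) (\<phi>::'a \<Rightarrow> nat \<Rightarrow> nat). finite X \<and> X \<noteq> {} \<and>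
         (\<forall>g \<in> carrier G. bij_betw (\<phi> g) X X) \<and>
         (\<forall>g \<in> K. \<forall>h \<in> K. hamming X (\<phi> (g \<otimes>\<^bsub>G\<^esub> h)) (\<phi> g \<circ> \<phi> h) \<le> \<epsilon>) \<and>
         (\<forall>g \<in> K. \<forall>h \<in> K. g \<noteq> h \<longrightarrow> hamming X (\<phi> g) (\<phi> h) \<ge> 1 - \<epsilon>))))"

definition is_morphism_approx ::
  "('a, 'b) monoid_scheme \<Rightarrow> nat set \<Rightarrow> 'a set \<Rightarrow> real \<Rightarrow> ('a \<Rightarrow> nat \<Rightarrow> nat) \<Rightarrow> bool" where
  "is_morphism_approx M X K \<epsilon> \<phi> \<longleftrightarrow>
     (\<forall>k1 \<in> K. \<forall>k2 \<in> K. hamming X (\<phi> (k1 \<otimes>\<^bsub>M\<^esub> k2)) (\<phi> k1 \<circ> \<phi> k2) \<le> \<epsilon>) \<and>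
     hamming X (\<phi> \<one>\<^bsub>M\<^esub>) id \<le> \<epsilon>"

definition is_injective_approx ::
  "nat set \<Rightarrow> 'a set \<Rightarrow> real \<Rightarrow> ('a \<Rightarrow> nat \<Rightarrow> nat) \<Rightarrow> bool" where
  "is_injective_approx X K \<alpha> \<phi> \<longleftrightarrow>
     (\<forall>k1 \<in> K. \<forall>k2 \<in> K. k1 \<noteq> k2 \<longrightarrow> hamming X (\<phi> k1) (\<phi> k2) \<ge> \<alpha>)"

definition sofic_monoid :: "('a, 'b) monoid_scheme \<Rightarrow> bool" where
  "sofic_monoid M \<longleftrightarrow>
    (\<forall>K \<subseteq> carrier M. finite K \<longrightarrow> (\<forall>\<epsilon>::real. \<epsilon> > 0 \<longrightarrow>
      (\<exists>(X::nat set) (\<phi>::'a \<Rightarrow> nat \<Rightarrow> nat). finite X \<and> X \<noteq> {} \<and>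
         (\<forall>m \<in> carrier M. \<phi> m ` X \<subseteq> X) \<and>
         is_injective_approx X K (1 - \<epsilon>) \<phi> \<and>
         is_morphism_approx M X K \<epsilon> \<phi>)))"

end

theory Submission
  imports Defs
begin

text \<open>A group approximation is in particular a monoid approximation; the only point is that
  an approximate idempotent bijection is close to the identity. Conversely, in a monoid
  approximation of a group each \<open>\<phi> g\<close> has an approximate right inverse \<open>\<phi> (inv g)\<close>;
  an almost-surjective self-map of a finite set agrees with some bijection on the set where
  \<open>\<phi> g \<circ> \<phi> (inv g)\<close> is the identity, so replacing each \<open>\<phi> g\<close> by such a bijection
  changes all Hamming distances by a bounded multiple of the error.\<close>

lemma hamming_sym: "hamming X f g = hamming X g f"
  unfolding hamming_def by (metis (mono_tags, lifting) Collect_cong)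

lemma hamming_triangle:
  assumes "finite X"
  shows "hamming X f h \<le> hamming X f g + hamming X g h"
proof -
  have "card {x\<in>X. f x \<noteq> h x} \<le> card ({x\<in>X. f x \<noteq> g x} \<union> {x\<in>X. g x \<noteq> h x})"
    by (rule card_mono) (use assms in auto)
  also have "\<dots> \<le> card {x\<in>X. f x \<noteq> g x} + card {x\<in>X. g x \<noteq> h x}"
    by (rule card_Un_le)
  finally show ?thesis
    unfolding hamming_def add_divide_distrib[symmetric]
    by (intro divide_right_mono) auto
qed

lemma hamming_comp_bij_le:
  assumes "finite X" and q: "bij_betw q X X"
  shows "hamming X (a \<circ> f) (b \<circ> q) \<le> hamming X a b + hamming X f q"
proof -
  have "card {x\<in>X. a (q x) \<noteq> b (q x)} \<le> card {y\<in>X. a y \<noteq> b y}"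
    by (rule card_inj_on_le[where f = q])
      (use q assms(1) in \<open>auto simp: bij_betw_def inj_on_def\<close>)
  moreover have "card {x\<in>X. a (f x) \<noteq> b (q x)}
      \<le> card ({x\<in>X. a (q x) \<noteq> b (q x)} \<union> {x\<in>X. f x \<noteq> q x})"
    by (rule card_mono) (use assms(1) in auto)
  moreover have "\<dots> \<le> card {x\<in>X. a (q x) \<noteq> b (q x)} + card {x\<in>X. f x \<noteq> q x}"
    by (rule card_Un_le)
  ultimately show ?thesis
    unfolding hamming_def add_divide_distrib[symmetric]
    by (intro divide_right_mono) auto
qed

lemma hamming_comp_perturbation_le:
  assumes "finite X" "bij_betw q' X X"
  shows "hamming X r' (p' \<circ> q')
    \<le> hamming X r r' + hamming X r (p \<circ> q) + hamming X p p' + hamming X q q'"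
  using hamming_triangle[OF assms(1), of r' "p' \<circ> q'" r]
    hamming_triangle[OF assms(1), of r "p' \<circ> q'" "p \<circ> q"]
    hamming_comp_bij_le[OF assms, of p q p'] hamming_sym[of X r r']
  by linarith

lemma hamming_id_le_hamming_comp_self:
  assumes "finite X" "inj_on p X" "p ` X \<subseteq> X"
  shows "hamming X p id \<le> hamming X p (p \<circ> p)"
proof -
  have "{x\<in>X. p x \<noteq> id x} \<subseteq> {x\<in>X. p x \<noteq> (p \<circ> p) x}"
    using assms(2,3) by (auto simp: inj_on_def)
  then have "card {x\<in>X. p x \<noteq> id x} \<le> card {x\<in>X. p x \<noteq> (p \<circ> p) x}"
    using assms(1) by (intro card_mono) auto
  then show ?thesis
    unfolding hamming_def by (intro divide_right_mono) auto
qed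

text \<open>The bijection is \<open>f\<close> on \<open>g ` A\<close>, where \<open>A\<close> is the fixed-point set of \<open>f \<circ> g\<close>;
  \<open>f\<close> maps \<open>g ` A\<close> bijectively onto \<open>A\<close>, and the complements have equal size.\<close>

lemma exists_bij_betw_close:
  assumes X: "finite X" and f: "f ` X \<subseteq> X" and g: "g ` X \<subseteq> X"
  shows "\<exists>p. bij_betw p X X \<and> hamming X p f \<le> hamming X (f \<circ> g) id"
proof -
  define A where "A = {x\<in>X. f (g x) = x}"
  define B where "B = g ` A"
  have AX: "A \<subseteq> X" and BX: "B \<subseteq> X" unfolding B_def A_def using g by auto
  have "inj_on g A" unfolding A_def inj_on_def by (metis (mono_tags, lifting) mem_Collect_eq)
  then have "card B = card A" unfolding B_def by (rule card_image)
  moreover have "f ` B = A" unfolding B_def A_def by force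
  ultimately have f_B: "bij_betw f B A"
    using finite_subset[OF BX X] by (metis bij_betw_def card_image_le eq_card_imp_inj_on)
  have "card (X - B) = card (X - A)"
    using \<open>card B = card A\<close> AX BX X by (simp add: card_Diff_subset finite_subset)
  then obtain h where h: "bij_betw h (X - B) (X - A)"
    using finite_same_card_bij X by (meson finite_Diff)
  define p where "p x = (if x \<in> B then f x else h x)" for x
  have "bij_betw p (B \<union> (X - B)) (A \<union> (X - A))"
    unfolding p_def by (rule bij_betw_disjoint_Un[OF f_B h]) auto
  with AX BX have p: "bij_betw p X X" by (simp add: Un_absorb1)
  have "{x\<in>X. p x \<noteq> f x} \<subseteq> X - B" by (auto simp: p_def)
  then have "card {x\<in>X. p x \<noteq> f x} \<le> card (X - A)"
    using X \<open>card (X - B) = card (X - A)\<close> by (metis card_mono finite_Diff)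
  also have "X - A = {x\<in>X. (f \<circ> g) x \<noteq> id x}" unfolding A_def by auto
  finally have "hamming X p f \<le> hamming X (f \<circ> g) id"
    unfolding hamming_def by (intro divide_right_mono) auto
  with p show ?thesis by blast
qed

lemma exists_bij_betw_perturbation:
  assumes "finite X" and maps: "\<forall>g\<in>S. \<phi> g ` X \<subseteq> X"
    and right_inv: "\<forall>g\<in>S. \<exists>g'\<in>S. hamming X (\<phi> g \<circ> \<phi> g') id \<le> c"
  shows "\<exists>\<psi>. (\<forall>g. bij_betw (\<psi> g) X X) \<and> (\<forall>g\<in>S. hamming X (\<phi> g) (\<psi> g) \<le> c)"
proof -
  have "\<exists>p. bij_betw p X X \<and> (g \<in> S \<longrightarrow> hamming X (\<phi> g) p \<le> c)" for g
  proof (cases "g \<in> S")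
    case True
    then obtain g' where "g' \<in> S" "hamming X (\<phi> g \<circ> \<phi> g') id \<le> c"
      using right_inv by blast
    with True maps exists_bij_betw_close[OF assms(1), of "\<phi> g" "\<phi> g'"] show ?thesis
      by (force simp: hamming_sym[of X "\<phi> g"])
  qed (auto intro: bij_betw_id)
  then show ?thesis by metis
qed

lemma (in group) sofic_monoid_if_sofic_group:
  assumes "sofic_group G"
  shows "sofic_monoid G"
  unfolding sofic_monoid_def
proof (intro allI impI)
  fix K and e :: real
  assume K: "K \<subseteq> carrier G" "finite K" and e: "0 < e"
  then obtain X \<phi> where X: "finite X" "X \<noteq> {}"
    and bij: "\<forall>g\<in>carrier G. bij_betw (\<phi> g) X X"
    and mor: "\<forall>g\<in>insert \<one> K. \<forall>h\<in>insert \<one> K. hamming X (\<phi> (g \<otimes> h)) (\<phi> g \<circ> \<phi> h) \<le> e"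
    and inj: "\<forall>g\<in>insert \<one> K. \<forall>h\<in>insert \<one> K. g \<noteq> h \<longrightarrow> hamming X (\<phi> g) (\<phi> h) \<ge> 1 - e"
    using assms[unfolded sofic_group_def, rule_format, of "insert \<one> K" e] by auto
  have "bij_betw (\<phi> \<one>) X X" using bij by simp
  then have "hamming X (\<phi> \<one>) id \<le> hamming X (\<phi> (\<one> \<otimes> \<one>)) (\<phi> \<one> \<circ> \<phi> \<one>)"
    using hamming_id_le_hamming_comp_self[OF X(1)] by (simp add: bij_betw_def)
  also have "\<dots> \<le> e" using mor by blast
  finally show "\<exists>X \<phi>. finite X \<and> X \<noteq> {} \<and> (\<forall>m\<in>carrier G. \<phi> m ` X \<subseteq> X) \<and>
      is_injective_approx X K (1 - e) \<phi> \<and> is_morphism_approx G X K e \<phi>"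
    unfolding is_injective_approx_def is_morphism_approx_def
    using X bij mor inj bij_betw_imp_surj_on by (intro exI[of _ X] exI[of _ \<phi>]) fastforce
qed

lemma (in group) sofic_group_if_sofic_monoid:
  assumes "sofic_monoid G"
  shows "sofic_group G"
  unfolding sofic_group_def
proof (intro allI impI)
  fix K and e :: real
  assume K: "K \<subseteq> carrier G" "finite K" and e: "0 < e"
  \<comment> \<open>\<open>7 = 2 + 1 + 2 + 2\<close>: the four error terms of \<open>hamming_comp_perturbation_le\<close>\<close>
  define d where "d = e / 7"
  define S where "S = K \<union> (\<lambda>(g, h). g \<otimes> h) ` (K \<times> K)"
  define K' where "K' = S \<union> (\<lambda>g. inv g) ` S"
  have S: "S \<subseteq> carrier G" unfolding S_def using K by auto
  then have K': "K' \<subseteq> carrier G" "finite K'" unfolding K'_def S_def using K by auto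
  obtain X \<phi> where X: "finite X" "X \<noteq> {}" and maps: "\<forall>g\<in>carrier G. \<phi> g ` X \<subseteq> X"
    and inj: "is_injective_approx X K' (1 - d) \<phi>" and mor: "is_morphism_approx G X K' d \<phi>"
    using assms[unfolded sofic_monoid_def, rule_format, OF K', of d] e unfolding d_def by auto
  have inv_in_K': "inv g \<in> K'" if "g \<in> K'" for g
    using that S unfolding K'_def by (auto simp: subset_iff)
  have "hamming X (\<phi> g \<circ> \<phi> (inv g)) id \<le> 2 * d" if "g \<in> K'" for g
  proof -
    have "hamming X (\<phi> (g \<otimes> inv g)) (\<phi> g \<circ> \<phi> (inv g)) \<le> d"
      using mor that inv_in_K' unfolding is_morphism_approx_def by blast
    then have "hamming X (\<phi> g \<circ> \<phi> (inv g)) (\<phi> \<one>) \<le> d"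
      using that K' by (metis hamming_sym r_inv subsetD)
    moreover have "hamming X (\<phi> \<one>) id \<le> d" using mor by (simp add: is_morphism_approx_def)
    ultimately show ?thesis
      using hamming_triangle[OF X(1), of "\<phi> g \<circ> \<phi> (inv g)" id "\<phi> \<one>"] by linarith
  qed
  then obtain \<psi> where bij: "\<forall>g. bij_betw (\<psi> g) X X"
    and close: "\<forall>g\<in>K'. hamming X (\<phi> g) (\<psi> g) \<le> 2 * d"
    using exists_bij_betw_perturbation[OF X(1), of K' \<phi> "2 * d"] maps K' inv_in_K' by blast
  have in_K': "g \<in> K'" "g \<otimes> h \<in> K'" if "g \<in> K" "h \<in> K" for g h
    using that unfolding K'_def S_def by auto
  show "\<exists>X \<psi>. finite X \<and> X \<noteq> {} \<and> (\<forall>g\<in>carrier G. bij_betw (\<psi> g) X X) \<and>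
      (\<forall>g\<in>K. \<forall>h\<in>K. hamming X (\<psi> (g \<otimes> h)) (\<psi> g \<circ> \<psi> h) \<le> e) \<and>
      (\<forall>g\<in>K. \<forall>h\<in>K. g \<noteq> h \<longrightarrow> 1 - e \<le> hamming X (\<psi> g) (\<psi> h))"
  proof (intro exI[of _ X] exI[of _ \<psi>] conjI ballI impI)
    fix g h assume gh: "g \<in> K" "h \<in> K"
    have "hamming X (\<phi> (g \<otimes> h)) (\<phi> g \<circ> \<phi> h) \<le> d"
      using mor in_K'(1)[OF gh] in_K'(1)[OF gh(2,1)] unfolding is_morphism_approx_def by blast
    then show "hamming X (\<psi> (g \<otimes> h)) (\<psi> g \<circ> \<psi> h) \<le> e"
      using hamming_comp_perturbation_le[OF X(1) bij[rule_format, of h], where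
          r' = "\<psi> (g \<otimes> h)" and r = "\<phi> (g \<otimes> h)" and p = "\<phi> g" and q = "\<phi> h" and p' = "\<psi> g"]
        close[rule_format, OF in_K'(2)[OF gh]] close[rule_format, OF in_K'(1)[OF gh]]
        close[rule_format, OF in_K'(1)[OF gh(2,1)]]
      unfolding d_def by linarith
  next
    fix g h assume gh: "g \<in> K" "h \<in> K" "g \<noteq> h"
    have "1 - d \<le> hamming X (\<phi> g) (\<phi> h)"
      using inj in_K'(1)[OF gh(1,2)] in_K'(1)[OF gh(2,1)] gh(3)
      unfolding is_injective_approx_def by blast
    then show "1 - e \<le> hamming X (\<psi> g) (\<psi> h)"
      using hamming_triangle[OF X(1), of "\<phi> g" "\<phi> h" "\<psi> g"]
        hamming_triangle[OF X(1), of "\<psi> g" "\<phi> h" "\<psi> h"]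
        close[rule_format, OF in_K'(1)[OF gh(1,2)]] close[rule_format, OF in_K'(1)[OF gh(2,1)]]
        hamming_sym[of X "\<psi> h" "\<phi> h"] e
      unfolding d_def by linarith
  qed (use X bij in auto)
qed

theorem proposition3p4:
  fixes G :: "('a, 'b) monoid_scheme"
  assumes "group G"
  shows "sofic_group G \<longleftrightarrow> sofic_monoid G"
  using group.sofic_monoid_if_sofic_group[OF assms] group.sofic_group_if_sofic_monoid[OF assms]
  by blast

end
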